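(* Let $V:\mathbb{R}\to\mathbb{R}$ be analytic at the origin. Then $V$ is separable (i.e. there exist univariate functions $F,G$ with $V\left(\frac{u+v}{2}\right)-V\left(\frac{u-v}{2}\right)=F(u)\,G(v)$ for all $u,v$) if and only if $V$ admits the functional form $$V\left(\frac{u+v}{2}\right)=\frac{1}{2}f(u)\,g(v)+h(u,v)$$ for some functions $f$ of $u$, $g$ of $v$, and $h$ of $(u,v)$ satisfying $g(-v)=-g(v)$ and $h(u,-v)=h(u,v)$. In this case the divisors of $V$ are $F=f$ and $G=g$.
   Context: A potential $V(q)$ is called separable if $V\left(\frac{u+v}{2}\right)-V\left(\frac{u-v}{2}\right)=F(u)\,G(v)$ where $F$ and $G$ are univariate functions of $u$ and $v$ respectively; $F$ and $G$ are called the divisors of $V$. *)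

theory Defs
  imports Complex_Main
begin

definition real_analytic_at_0 :: "(real \<Rightarrow> real) \<Rightarrow> bool" where
  "real_analytic_at_0 V \<longleftrightarrow>
     (\<exists>r>0. \<exists>a::nat \<Rightarrow> real. \<forall>x. \<bar>x\<bar> < r \<longrightarrow> (\<lambda>n. a n * x ^ n) sums V x)"

definition divisors :: "(real \<Rightarrow> real) \<Rightarrow> (real \<Rightarrow> real) \<Rightarrow> (real \<Rightarrow> real) \<Rightarrow> bool" where
  "divisors V F G \<longleftrightarrow> (\<forall>u v. V ((u + v) / 2) - V ((u - v) / 2) = F u * G v)"

definition separable :: "(real \<Rightarrow> real) \<Rightarrow> bool" where
  "separable V \<longleftrightarrow> (\<exists>F G. divisors V F G)"

end

theory Submission
  imports Defs
begin

text \<open>Substituting \<open>-v\<close> for \<open>v\<close> in the functional form, the even parts \<open>h\<close> cancel in the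
  difference and the odd parts \<open>g\<close> add up, giving divisors \<open>f, g\<close>. Conversely, the same
  substitution in the divisor equation shows that \<open>F u * G v\<close> is odd in \<open>v\<close>; so \<open>G\<close> may be
  replaced by its odd part, and \<open>V ((u + v) / 2)\<close> splits into the half difference
  \<open>F u * G v / 2\<close> and the half sum \<open>(V ((u + v) / 2) + V ((u - v) / 2)) / 2\<close>, which is even
  in \<open>v\<close>.\<close>

definition odd_even_form ::
    "(real \<Rightarrow> real) \<Rightarrow> (real \<Rightarrow> real) \<Rightarrow> (real \<Rightarrow> real) \<Rightarrow> (real \<Rightarrow> real \<Rightarrow> real) \<Rightarrow> bool" where
  "odd_even_form V f g h \<longleftrightarrow>
     (\<forall>v. g (- v) = - g v) \<and> (\<forall>u v. h u (- v) = h u v) \<and>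
     (\<forall>u v. V ((u + v) / 2) = 1/2 * f u * g v + h u v)"

lemma divisors_if_odd_even_form:
  assumes "odd_even_form V f g h"
  shows "divisors V f g"
  unfolding divisors_def
proof (intro allI)
  fix u v :: real
  have g_odd: "g (- v) = - g v" and h_even: "h u (- v) = h u v"
    and form: "\<And>v. V ((u + v) / 2) = 1/2 * f u * g v + h u v"
    using assms unfolding odd_even_form_def by auto
  from form[of "- v"] have "V ((u - v) / 2) = - (1/2 * f u * g v) + h u v"
    by (simp add: g_odd h_even)
  with form[of v] show "V ((u + v) / 2) - V ((u - v) / 2) = f u * g v"
    by simp
qed

lemma divisors_product_odd:
  assumes "divisors V F G"
  shows "F u * G (- v) = - (F u * G v)"
  using assms[unfolded divisors_def, rule_format, of u v]
    assms[unfolded divisors_def, rule_format, of u "-v"]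
  by simp

lemma odd_even_form_if_divisors:
  assumes "divisors V F G"
  shows "odd_even_form V F (\<lambda>v. (G v - G (- v)) / 2)
           (\<lambda>u v. (V ((u + v) / 2) + V ((u - v) / 2)) / 2)"
proof -
  have odd_part: "1/2 * F u * ((G v - G (- v)) / 2) = (F u * G v) / 2" for u v
    using divisors_product_odd[OF assms, of u v] by (simp add: right_diff_distrib)
  have "V ((u + v) / 2) - V ((u - v) / 2) = F u * G v" for u v
    using assms unfolding divisors_def by blast
  then have "V ((u + v) / 2) = (F u * G v) / 2 + (V ((u + v) / 2) + V ((u - v) / 2)) / 2"
    for u v
    by (simp add: field_simps)
  then show ?thesis
    unfolding odd_even_form_def odd_part by (auto simp: add.commute field_simps)
qed

lemma separable_iff_odd_even_form:
  "separable V \<longleftrightarrow> (\<exists>f g h. odd_even_form V f g h)"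
  unfolding separable_def
  using divisors_if_odd_even_form odd_even_form_if_divisors by blast

theorem theorem1:
  fixes V :: "real \<Rightarrow> real"
  assumes "real_analytic_at_0 V"
  shows "(separable V \<longleftrightarrow>
           (\<exists>f g (h :: real \<Rightarrow> real \<Rightarrow> real).
              (\<forall>v. g (- v) = - g v) \<and> (\<forall>u v. h u (- v) = h u v) \<and>
              (\<forall>u v. V ((u + v) / 2) = 1/2 * f u * g v + h u v)))
       \<and> (\<forall>f g (h :: real \<Rightarrow> real \<Rightarrow> real).
              (\<forall>v. g (- v) = - g v) \<and> (\<forall>u v. h u (- v) = h u v) \<and>
              (\<forall>u v. V ((u + v) / 2) = 1/2 * f u * g v + h u v)
            \<longrightarrow> divisors V f g)"
  using separable_iff_odd_even_form[of V] divisors_if_odd_even_form[of V]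
  unfolding odd_even_form_def by blast

end
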